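(* Let $(\mathcal H,\mathcal A)$ and $(\mathcal H',\mathcal A')$ be hypergraph pairs (with vertices in a common vertex set) such that for any $\sigma\in\mathcal H$ and $\sigma'\in\mathcal H'$, either $\sigma\cap\sigma'=\emptyset$ or $\sigma\cap\sigma'\in\mathcal H\cap\mathcal H'$; and for any $\tau\in\mathcal A$ and $\tau'\in\mathcal A'$, either $\tau\cap\tau'=\emptyset$ or $\tau\cap\tau'\in\mathcal A\cap\mathcal A'$. Then there is a long exact sequence of relative embedded homology $$\cdots\to H_n(\mathcal H\cap\mathcal H',\mathcal A\cap\mathcal A')\to H_n(\mathcal H,\mathcal A)\oplus H_n(\mathcal H',\mathcal A')\to H_n(\mathcal H\cup\mathcal H',\mathcal A\cup\mathcal A')\to H_{n-1}(\mathcal H\cap\mathcal H',\mathcal A\cap\mathcal A')\to\cdots.$$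
   Context: A hypergraph is a finite set of nonempty finite subsets of a vertex set (hyperedges); an $n$-hyperedge has $n+1$ vertices. A hypergraph pair $(\mathcal H,\mathcal A)$ means $\mathcal A\subseteq\mathcal H$. Unions and intersections of hypergraphs are taken as sets of hyperedges. The associated simplicial complex is $\Delta\mathcal H=\{\sigma\ne\emptyset:\sigma\subseteq\tau\text{ for some }\tau\in\mathcal H\}$. Fix an abelian coefficient group $G$; chains are simplicial chains with coefficients in $G$ (all inside the chain complex of the full simplex on the vertex set), with boundary $\partial$; $G(\mathcal H)_n$ is the group of $G$-linear combinations of $n$-hyperedges of $\mathcal H$, and $\mathrm{Inf}_n(\mathcal H)=G(\mathcal H)_n\cap\partial_n^{-1}(G(\mathcal H)_{n-1})$. Relative embedded homology: $H_n(\mathcal H,\mathcal A)=H_n(\mathrm{Inf}_*(\mathcal H)/\mathrm{Inf}_*(\mathcal A))$. *)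

theory Defs
  imports "HOL-Algebra.Algebra"
begin

text \<open>Vertices carry a linear order (used to orient simplices). A chain of degree n is a
finitely supported function from simplices (finite nonempty vertex sets with n+1 elements)
to the coefficient group.\<close>

definition chain_deg :: "int \<Rightarrow> ('v set \<Rightarrow> 'g::zero) set" where
  "chain_deg n = {c. finite {\<sigma>. c \<sigma> \<noteq> 0} \<and>
      (\<forall>\<sigma>. c \<sigma> \<noteq> 0 \<longrightarrow> finite \<sigma> \<and> \<sigma> \<noteq> {} \<and> int (card \<sigma>) = n + 1)}"

text \<open>Simplicial boundary: the face of \<sigma> opposite to its i-th vertex (i = number of smaller
vertices) gets sign (-1)^i; faces are nonempty (non-augmented complex).\<close>

definition bd :: "('v::linorder set \<Rightarrow> 'g::ab_group_add) \<Rightarrow> 'v set \<Rightarrow> 'g" where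
  "bd c = (\<lambda>\<tau>. if \<tau> = {} then 0 else
      (\<Sum>\<sigma>\<in>{\<sigma>. c \<sigma> \<noteq> 0}. \<Sum>v\<in>\<sigma>.
          if \<sigma> - {v} = \<tau> then (if even (card {w\<in>\<sigma>. w < v}) then c \<sigma> else - c \<sigma>) else 0))"

definition GH :: "'v set set \<Rightarrow> int \<Rightarrow> ('v set \<Rightarrow> 'g::zero) set" where
  "GH H n = {c \<in> chain_deg n. \<forall>\<sigma>. c \<sigma> \<noteq> 0 \<longrightarrow> \<sigma> \<in> H}"

definition Infc :: "'v::linorder set set \<Rightarrow> int \<Rightarrow> ('v set \<Rightarrow> 'g::ab_group_add) set" where
  "Infc H n = {c \<in> GH H n. bd c \<in> GH H (n - 1)}"

definition Inf_grp :: "'v::linorder set set \<Rightarrow> int \<Rightarrow> ('v set \<Rightarrow> 'g::ab_group_add) monoid" where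
  "Inf_grp H n = \<lparr>carrier = Infc H n, monoid.mult = (\<lambda>a b. (\<lambda>\<sigma>. a \<sigma> + b \<sigma>)), one = (\<lambda>\<sigma>. 0)\<rparr>"

definition Qgrp :: "'v::linorder set set \<Rightarrow> 'v set set \<Rightarrow> int \<Rightarrow> ('v set \<Rightarrow> 'g::ab_group_add) set monoid" where
  "Qgrp H A n = Inf_grp H n Mod Infc A n"

definition qbd :: "'v::linorder set set \<Rightarrow> 'v set set \<Rightarrow> int \<Rightarrow> ('v set \<Rightarrow> 'g::ab_group_add) set
                   \<Rightarrow> ('v set \<Rightarrow> 'g) set" where
  "qbd H A n Y = Infc A (n - 1) #>\<^bsub>Inf_grp H (n - 1)\<^esub> bd (SOME c. c \<in> Y)"

definition Zrel :: "'v::linorder set set \<Rightarrow> 'v set set \<Rightarrow> int \<Rightarrow> ('v set \<Rightarrow> 'g::ab_group_add) set set" where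
  "Zrel H A n = kernel (Qgrp H A n) (Qgrp H A (n - 1)) (qbd H A n)"

definition Brel :: "'v::linorder set set \<Rightarrow> 'v set set \<Rightarrow> int \<Rightarrow> ('v set \<Rightarrow> 'g::ab_group_add) set set" where
  "Brel H A n = qbd H A (n + 1) ` carrier (Qgrp H A (n + 1))"

definition rel_hom :: "'v::linorder set set \<Rightarrow> 'v set set \<Rightarrow> int
                       \<Rightarrow> ('v set \<Rightarrow> 'g::ab_group_add) set set monoid" where
  "rel_hom H A n = ((Qgrp H A n)\<lparr>carrier := Zrel H A n\<rparr>) Mod Brel H A n"

definition hcls :: "'v::linorder set set \<Rightarrow> 'v set set \<Rightarrow> int \<Rightarrow> ('v set \<Rightarrow> 'g::ab_group_add)
                    \<Rightarrow> ('v set \<Rightarrow> 'g) set set" where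
  "hcls H A n c = Brel H A n #>\<^bsub>(Qgrp H A n)\<lparr>carrier := Zrel H A n\<rparr>\<^esub>
                     (Infc A n #>\<^bsub>Inf_grp H n\<^esub> c)"

text \<open>Map on homology induced by an inclusion of pairs into the pair (L,C):
a class is sent to the class of any representative chain.\<close>
definition ind_map :: "'v::linorder set set \<Rightarrow> 'v set set \<Rightarrow> int \<Rightarrow> ('v set \<Rightarrow> 'g::ab_group_add) set set
                       \<Rightarrow> ('v set \<Rightarrow> 'g) set set" where
  "ind_map L C n Y = hcls L C n (SOME c. c \<in> \<Union>Y)"

definition mv_alpha where
  "mv_alpha H A H' A' n = (\<lambda>Y. (ind_map H A n Y, ind_map H' A' n Y))"

definition mv_beta where
  "mv_beta H A H' A' n = (\<lambda>p. ind_map (H \<union> H') (A \<union> A') n (fst p)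
       \<otimes>\<^bsub>rel_hom (H \<union> H') (A \<union> A') n\<^esub>
     inv\<^bsub>rel_hom (H \<union> H') (A \<union> A') n\<^esub> (ind_map (H \<union> H') (A \<union> A') n (snd p)))"

definition hypergraph :: "'v set set \<Rightarrow> bool" where
  "hypergraph H \<longleftrightarrow> finite H \<and> (\<forall>\<sigma>\<in>H. finite \<sigma> \<and> \<sigma> \<noteq> {})"

end

theory Submission
  imports Defs "HOL-Library.Function_Algebras"
begin

text \<open>
  The meet condition makes restriction of chains compatible with the boundary: an embedded chain
  of H \<union> H' splits as the sum of an embedded chain of H and one of H', and likewise for A \<union> A'.
  Hence Inf(H \<inter> H')/Inf(A \<inter> A') \<rightarrow> Inf(H)/Inf(A) \<oplus> Inf(H')/Inf(A') \<rightarrow> Inf(H \<union> H')/Inf(A \<union> A')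
  is a short exact sequence of chain complexes and the long exact sequence is the usual zig-zag:
  a relative cycle z = x - y of the union, with x and y chains of H and H', is sent to the class
  of the chain that agrees with bd x modulo A and with bd y modulo A'. Homology classes are
  handled through representatives: two relative cycles are homologous iff their difference has
  the form j + bd d with j a chain of the subpair.
\<close>

section \<open>Simplicial boundary of finitely supported chains\<close>

definition signed :: "nat \<Rightarrow> 'g::ab_group_add \<Rightarrow> 'g" where
  "signed k x = (if even k then x else - x)"

lemma signed_zero [simp]: "signed k 0 = 0"
  by (simp add: signed_def)

lemma signed_add: "signed k (x + y) = signed k x + signed k y"
  by (simp add: signed_def)

lemma signed_signed: "signed a (signed b x) = signed (a + b) x"
  by (simp add: signed_def)

lemma signed_sum: "signed k (sum f S) = (\<Sum>x\<in>S. signed k (f x))"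
  by (simp add: signed_def sum_negf)

abbreviation rank_in :: "'v::linorder set \<Rightarrow> 'v \<Rightarrow> nat" where
  "rank_in \<sigma> v \<equiv> card {w\<in>\<sigma>. w < v}"

definition finite_chain :: "('v set \<Rightarrow> 'g::zero) \<Rightarrow> bool" where
  "finite_chain c \<longleftrightarrow> finite {\<sigma>. c \<sigma> \<noteq> 0} \<and> (\<forall>\<sigma>. c \<sigma> \<noteq> 0 \<longrightarrow> finite \<sigma>)"

lemma finite_chain_vertices: "finite_chain c \<Longrightarrow> finite (\<Union>{\<sigma>. c \<sigma> \<noteq> 0})"
  unfolding finite_chain_def by auto

lemma finite_chain_add:
  fixes c d :: "'v set \<Rightarrow> 'g::ab_group_add"
  assumes "finite_chain c" "finite_chain d" shows "finite_chain (c + d)"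
proof -
  have "{\<sigma>. (c + d) \<sigma> \<noteq> 0} \<subseteq> {\<sigma>. c \<sigma> \<noteq> 0} \<union> {\<sigma>. d \<sigma> \<noteq> 0}" by auto
  with assms have "finite {\<sigma>. (c + d) \<sigma> \<noteq> 0}"
    unfolding finite_chain_def by (meson finite_Un finite_subset)
  moreover have "finite \<sigma>" if "(c + d) \<sigma> \<noteq> 0" for \<sigma>
    using assms that unfolding finite_chain_def by (cases "c \<sigma> = 0") auto
  ultimately show ?thesis unfolding finite_chain_def by blast
qed

lemma finite_chain_uminus: "finite_chain c \<Longrightarrow> finite_chain (- (c :: 'v set \<Rightarrow> 'g::ab_group_add))"
  by (simp add: finite_chain_def)

lemma bd_signed:
  "bd c \<tau> = (if \<tau> = {} then 0 else (\<Sum>\<sigma>\<in>{\<sigma>. c \<sigma> \<noteq> 0}. \<Sum>v\<in>\<sigma>.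
      if \<sigma> - {v} = \<tau> then signed (rank_in \<sigma> v) (c \<sigma>) else 0))"
  unfolding bd_def signed_def by simp

lemma bd_zero [simp]: "bd 0 = 0"
  by (simp add: bd_def fun_eq_iff)

lemma bd_nonzero_facet:
  assumes "bd c \<tau> \<noteq> 0"
  shows "\<tau> \<noteq> {} \<and> (\<exists>\<sigma> v. c \<sigma> \<noteq> 0 \<and> v \<in> \<sigma> \<and> \<tau> = \<sigma> - {v})"
proof (rule ccontr)
  assume "\<not> ?thesis"
  then have "\<tau> = {} \<or> (\<forall>\<sigma> v. c \<sigma> \<noteq> 0 \<longrightarrow> v \<in> \<sigma> \<longrightarrow> \<sigma> - {v} \<noteq> \<tau>)" by blast
  then have "bd c \<tau> = 0" unfolding bd_signed by (auto intro!: sum.neutral)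
  with assms show False by simp
qed

lemma bd_eq_sum_cofaces:
  fixes c :: "'v::linorder set \<Rightarrow> 'g::ab_group_add"
  assumes fin: "finite {\<sigma>. c \<sigma> \<noteq> 0}" and sub: "\<And>\<sigma>. c \<sigma> \<noteq> 0 \<Longrightarrow> \<sigma> \<subseteq> V"
    and V: "finite V" and ne: "\<tau> \<noteq> {}"
  shows "bd c \<tau> = (\<Sum>v\<in>V - \<tau>. signed (rank_in \<tau> v) (c (insert v \<tau>)))"
proof -
  let ?S = "{\<sigma>. c \<sigma> \<noteq> 0}"
  let ?g = "\<lambda>\<sigma> v. signed (rank_in \<sigma> v) (c \<sigma>)"
  have facets: "(\<Sum>v\<in>\<sigma>. if \<sigma> - {v} = \<tau> then ?g \<sigma> v else 0)
      = (\<Sum>v\<in>V - \<tau>. if \<sigma> = insert v \<tau> then ?g \<sigma> v else 0)" if "\<sigma> \<in> ?S" for \<sigma>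
  proof -
    have \<sigma>V: "\<sigma> \<subseteq> V" using sub that by auto
    have "(\<Sum>v\<in>\<sigma>. if \<sigma> - {v} = \<tau> then ?g \<sigma> v else 0) = (\<Sum>v\<in>{v\<in>\<sigma>. \<sigma> - {v} = \<tau>}. ?g \<sigma> v)"
      using finite_subset[OF \<sigma>V V] by (rule sum.inter_filter[symmetric])
    also have "{v\<in>\<sigma>. \<sigma> - {v} = \<tau>} = {v\<in>V - \<tau>. \<sigma> = insert v \<tau>}" using \<sigma>V by auto
    also have "(\<Sum>v\<in>\<dots>. ?g \<sigma> v) = (\<Sum>v\<in>V - \<tau>. if \<sigma> = insert v \<tau> then ?g \<sigma> v else 0)"
      using V by (intro sum.inter_filter) auto
    finally show ?thesis .
  qed
  have "bd c \<tau> = (\<Sum>\<sigma>\<in>?S. \<Sum>v\<in>V - \<tau>. if \<sigma> = insert v \<tau> then ?g \<sigma> v else 0)"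
    using ne facets by (simp add: bd_signed)
  also have "\<dots> = (\<Sum>v\<in>V - \<tau>. \<Sum>\<sigma>\<in>?S. if \<sigma> = insert v \<tau> then ?g \<sigma> v else 0)"
    by (rule sum.swap)
  also have "\<dots> = (\<Sum>v\<in>V - \<tau>. signed (rank_in \<tau> v) (c (insert v \<tau>)))"
  proof (rule sum.cong[OF refl])
    fix v assume "v \<in> V - \<tau>"
    have "{w\<in>insert v \<tau>. w < v} = {w\<in>\<tau>. w < v}" by auto
    then show "(\<Sum>\<sigma>\<in>?S. if \<sigma> = insert v \<tau> then ?g \<sigma> v else 0) = signed (rank_in \<tau> v) (c (insert v \<tau>))"
      using fin by (simp add: sum.delta)
  qed
  finally show ?thesis .
qed

lemma finite_chain_bd:
  assumes "finite_chain c" shows "finite_chain (bd c)"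
proof -
  have supp: "finite {\<sigma>. c \<sigma> \<noteq> 0}" and fin: "\<And>\<sigma>. c \<sigma> \<noteq> 0 \<Longrightarrow> finite \<sigma>"
    using assms by (auto simp: finite_chain_def)
  have "{\<tau>. bd c \<tau> \<noteq> 0} \<subseteq> (\<lambda>(\<sigma>, v). \<sigma> - {v}) ` (SIGMA \<sigma>:{\<sigma>. c \<sigma> \<noteq> 0}. \<sigma>)"
  proof
    fix \<tau> assume "\<tau> \<in> {\<tau>. bd c \<tau> \<noteq> 0}"
    then obtain \<sigma> v where "c \<sigma> \<noteq> 0" "v \<in> \<sigma>" "\<tau> = \<sigma> - {v}" using bd_nonzero_facet by blast
    then show "\<tau> \<in> (\<lambda>(\<sigma>, v). \<sigma> - {v}) ` (SIGMA \<sigma>:{\<sigma>. c \<sigma> \<noteq> 0}. \<sigma>)"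
      by (auto intro: image_eqI[of _ _ "(\<sigma>, v)"])
  qed
  moreover have "finite (SIGMA \<sigma>:{\<sigma>. c \<sigma> \<noteq> 0}. \<sigma>)"
    using supp fin by (intro finite_SigmaI) auto
  ultimately have "finite {\<tau>. bd c \<tau> \<noteq> 0}" by (meson finite_surj)
  moreover have "finite \<tau>" if "bd c \<tau> \<noteq> 0" for \<tau>
    using bd_nonzero_facet[OF that] fin by auto
  ultimately show ?thesis by (simp add: finite_chain_def)
qed

lemma bd_add:
  assumes c: "finite_chain c" and d: "finite_chain d" shows "bd (c + d) = bd c + bd d"
proof
  fix \<tau>
  define V where "V = \<Union>{\<sigma>. c \<sigma> \<noteq> 0} \<union> \<Union>{\<sigma>. d \<sigma> \<noteq> 0}"
  have V: "finite V" using c d finite_chain_vertices V_def by auto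
  let ?sum = "\<lambda>e. \<Sum>v\<in>V - \<tau>. signed (rank_in \<tau> v) (e (insert v \<tau>))"
  show "bd (c + d) \<tau> = (bd c + bd d) \<tau>"
  proof (cases "\<tau> = {}")
    case True then show ?thesis by (simp add: bd_def)
  next
    case False
    have "bd (c + d) \<tau> = ?sum (c + d)"
    proof (rule bd_eq_sum_cofaces[OF _ _ V False])
      show "finite {\<sigma>. (c + d) \<sigma> \<noteq> 0}"
        using finite_chain_add[OF c d] by (simp add: finite_chain_def)
      show "(c + d) \<sigma> \<noteq> 0 \<Longrightarrow> \<sigma> \<subseteq> V" for \<sigma>
        by (cases "c \<sigma> = 0") (auto simp: V_def)
    qed
    also have "\<dots> = ?sum c + ?sum d"
      by (simp add: signed_add sum.distrib)
    also have "?sum c = bd c \<tau>"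
      using c V False by (intro bd_eq_sum_cofaces[symmetric]) (auto simp: finite_chain_def V_def)
    also have "?sum d = bd d \<tau>"
      using d V False by (intro bd_eq_sum_cofaces[symmetric]) (auto simp: finite_chain_def V_def)
    finally have "bd (c + d) \<tau> = bd c \<tau> + bd d \<tau>" .
    then show ?thesis by (simp only: plus_fun_apply)
  qed
qed

lemma bd_uminus:
  assumes "finite_chain c" shows "bd (- c) = - bd c"
proof -
  have "bd c + bd (- c) = 0"
    using bd_add[OF assms finite_chain_uminus[OF assms]] by simp
  then show ?thesis by (simp add: add_eq_0_iff)
qed

lemma bd_diff: "finite_chain c \<Longrightarrow> finite_chain d \<Longrightarrow> bd (c - d) = bd c - bd d"
  using bd_add[of c "- d"] bd_uminus[of d] finite_chain_uminus[of d] by simp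

lemma sum_pairs_antisymmetric:
  fixes F :: "'a::linorder \<times> 'a \<Rightarrow> 'g::ab_group_add"
  assumes fin: "finite P" and sym: "\<And>u v. (u, v) \<in> P \<Longrightarrow> (v, u) \<in> P \<and> u \<noteq> v"
    and anti: "\<And>u v. (u, v) \<in> P \<Longrightarrow> u < v \<Longrightarrow> F (v, u) = - F (u, v)"
  shows "sum F P = 0"
proof -
  define P1 where "P1 = {p \<in> P. fst p < snd p}"
  have P: "P = P1 \<union> prod.swap ` P1"
  proof
    show "P \<subseteq> P1 \<union> prod.swap ` P1"
    proof
      fix p assume p: "p \<in> P"
      obtain u v where uv: "p = (u, v)" by fastforce
      show "p \<in> P1 \<union> prod.swap ` P1"
      proof (cases "u < v")
        case True
        then show ?thesis using p uv by (simp add: P1_def)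
      next
        case False
        then have "(v, u) \<in> P1" using p uv sym[of u v] by (auto simp: P1_def)
        then show ?thesis using uv by (auto intro: image_eqI[of _ _ "(v, u)"])
      qed
    qed
    show "P1 \<union> prod.swap ` P1 \<subseteq> P" using sym by (auto simp: P1_def)
  qed
  have fin1: "finite P1" using fin by (simp add: P1_def)
  have disj: "P1 \<inter> prod.swap ` P1 = {}" by (auto simp: P1_def)
  have "sum F P = sum F P1 + sum F (prod.swap ` P1)"
    unfolding P using fin1 disj by (simp add: sum.union_disjoint)
  also have "sum F (prod.swap ` P1) = sum (F \<circ> prod.swap) P1"
    by (rule sum.reindex) (auto simp: inj_on_def)
  also have "\<dots> = sum (\<lambda>p. - F p) P1"
    using anti by (intro sum.cong) (auto simp: P1_def)
  finally show ?thesis by (simp add: sum_negf)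
qed

lemma signed_rank_swap:
  assumes "finite \<rho>" "u \<notin> \<rho>" "u < v"
  shows "signed (rank_in \<rho> v + rank_in (insert v \<rho>) u) x
       = - signed (rank_in \<rho> u + rank_in (insert u \<rho>) v) x"
proof -
  have "{w\<in>insert u \<rho>. w < v} = insert u {w\<in>\<rho>. w < v}" using assms by blast
  then have u: "rank_in (insert u \<rho>) v = Suc (rank_in \<rho> v)"
    using assms by (simp add: card_insert_disjoint)
  have "{w\<in>insert v \<rho>. w < u} = {w\<in>\<rho>. w < u}" using assms by (blast dest: less_asym)
  then have v: "rank_in (insert v \<rho>) u = rank_in \<rho> u" by (rule arg_cong)
  show ?thesis unfolding u v by (simp add: signed_def)
qed

lemma bd_bd_eq_sum_pairs:
  assumes c: "finite_chain c" and ne: "\<rho> \<noteq> {}"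
  defines "V \<equiv> \<Union>{\<sigma>. c \<sigma> \<noteq> 0}"
  shows "bd (bd c) \<rho> = (\<Sum>(u, v)\<in>(SIGMA u:V - \<rho>. V - insert u \<rho>).
           signed (rank_in \<rho> u + rank_in (insert u \<rho>) v) (c (insert v (insert u \<rho>))))"
proof -
  have V: "finite V" using finite_chain_vertices[OF c] by (simp add: V_def)
  have cV: "\<And>\<sigma>. c \<sigma> \<noteq> 0 \<Longrightarrow> \<sigma> \<subseteq> V" by (auto simp: V_def)
  have bdV: "\<tau> \<subseteq> V" if "bd c \<tau> \<noteq> 0" for \<tau>
    using bd_nonzero_facet[OF that] cV by blast
  have "bd (bd c) \<rho> = (\<Sum>u\<in>V - \<rho>. signed (rank_in \<rho> u) (bd c (insert u \<rho>)))"
    using finite_chain_bd[OF c] bdV V ne by (intro bd_eq_sum_cofaces) (auto simp: finite_chain_def)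
  also have "\<dots> = (\<Sum>u\<in>V - \<rho>. \<Sum>v\<in>V - insert u \<rho>.
      signed (rank_in \<rho> u + rank_in (insert u \<rho>) v) (c (insert v (insert u \<rho>))))"
  proof (rule sum.cong[OF refl])
    fix u
    have "bd c (insert u \<rho>)
        = (\<Sum>v\<in>V - insert u \<rho>. signed (rank_in (insert u \<rho>) v) (c (insert v (insert u \<rho>))))"
      using c cV V by (intro bd_eq_sum_cofaces) (auto simp: finite_chain_def)
    then show "signed (rank_in \<rho> u) (bd c (insert u \<rho>)) = (\<Sum>v\<in>V - insert u \<rho>.
        signed (rank_in \<rho> u + rank_in (insert u \<rho>) v) (c (insert v (insert u \<rho>))))"
      by (simp add: signed_sum signed_signed)
  qed
  also have "\<dots> = (\<Sum>(u, v)\<in>(SIGMA u:V - \<rho>. V - insert u \<rho>).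
      signed (rank_in \<rho> u + rank_in (insert u \<rho>) v) (c (insert v (insert u \<rho>))))"
    using V by (subst sum.Sigma) auto
  finally show ?thesis .
qed

text \<open>Each codimension-2 face \<rho> appears twice in bd (bd c), once for each order of removing
  the two missing vertices, and the two signs differ.\<close>
lemma bd_bd:
  assumes c: "finite_chain c" shows "bd (bd c) = 0"
proof
  fix \<rho>
  define V where "V = \<Union>{\<sigma>. c \<sigma> \<noteq> 0}"
  have V: "finite V" using finite_chain_vertices[OF c] V_def by simp
  have bdV: "\<tau> \<subseteq> V" if "bd c \<tau> \<noteq> 0" for \<tau>
    using bd_nonzero_facet[OF that] by (auto simp: V_def)
  show "bd (bd c) \<rho> = 0 \<rho>"
  proof (cases "\<rho> \<noteq> {} \<and> \<rho> \<subseteq> V")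
    case False
    have "bd (bd c) \<rho> = 0"
    proof (rule ccontr)
      assume "bd (bd c) \<rho> \<noteq> 0"
      then obtain \<tau> u where "bd c \<tau> \<noteq> 0" "\<rho> = \<tau> - {u}" "\<rho> \<noteq> {}"
        using bd_nonzero_facet by blast
      with False bdV show False by blast
    qed
    then show ?thesis by simp
  next
    case True
    then have ne: "\<rho> \<noteq> {}" and \<rho>: "finite \<rho>" using V finite_subset by auto
    let ?F = "\<lambda>(u, v). signed (rank_in \<rho> u + rank_in (insert u \<rho>) v) (c (insert v (insert u \<rho>)))"
    let ?P = "SIGMA u:V - \<rho>. V - insert u \<rho>"
    have "sum ?F ?P = 0"
    proof (rule sum_pairs_antisymmetric)
      show "finite ?P" using V by auto
      show "(u, v) \<in> ?P \<Longrightarrow> (v, u) \<in> ?P \<and> u \<noteq> v" for u v by auto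
      show "?F (v, u) = - ?F (u, v)" if "(u, v) \<in> ?P" "u < v" for u v
      proof -
        have "u \<notin> \<rho>" "v \<notin> \<rho>" using that by auto
        moreover have "insert u (insert v \<rho>) = insert v (insert u \<rho>)" by blast
        ultimately show ?thesis using signed_rank_swap[OF \<rho> _ \<open>u < v\<close>] by simp
      qed
    qed
    then show ?thesis using bd_bd_eq_sum_pairs[OF c ne] by (simp add: V_def)
  qed
qed

section \<open>Embedded chains and the meet condition\<close>

lemma chain_deg_finite_chain: "c \<in> chain_deg n \<Longrightarrow> finite_chain c"
  by (simp add: chain_deg_def finite_chain_def)

lemma chain_deg_zero: "0 \<in> chain_deg n"
  by (simp add: chain_deg_def)

lemma chain_deg_add:
  fixes c d :: "'v set \<Rightarrow> 'g::ab_group_add"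
  assumes "c \<in> chain_deg n" "d \<in> chain_deg n" shows "c + d \<in> chain_deg n"
proof -
  have "finite {\<sigma>. (c + d) \<sigma> \<noteq> 0}"
    using finite_chain_add[OF assms[THEN chain_deg_finite_chain]] by (simp add: finite_chain_def)
  moreover have "finite \<sigma> \<and> \<sigma> \<noteq> {} \<and> int (card \<sigma>) = n + 1" if "(c + d) \<sigma> \<noteq> 0" for \<sigma>
  proof -
    have "c \<sigma> \<noteq> 0 \<or> d \<sigma> \<noteq> 0" using that by auto
    then show ?thesis using assms unfolding chain_deg_def by blast
  qed
  ultimately show ?thesis unfolding chain_deg_def by blast
qed

lemma chain_deg_uminus: "c \<in> chain_deg n \<Longrightarrow> - (c :: 'v set \<Rightarrow> 'g::ab_group_add) \<in> chain_deg n"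
  by (simp add: chain_deg_def)

lemma chain_deg_bd:
  assumes "c \<in> chain_deg n" shows "bd c \<in> chain_deg (n - 1)"
proof -
  have "int (card \<tau>) = n - 1 + 1" if nz: "bd c \<tau> \<noteq> 0" for \<tau>
  proof -
    obtain \<sigma> v where \<sigma>: "c \<sigma> \<noteq> 0" "v \<in> \<sigma>" "\<tau> = \<sigma> - {v}"
      using bd_nonzero_facet[OF nz] by blast
    then have "finite \<sigma>" "int (card \<sigma>) = n + 1" using assms by (auto simp: chain_deg_def)
    moreover have "1 \<le> card \<sigma>" using \<sigma>(2) \<open>finite \<sigma>\<close> by (auto simp: Suc_le_eq card_gt_0_iff)
    ultimately show ?thesis using \<sigma> by (simp add: card_Diff_singleton of_nat_diff)
  qed
  with finite_chain_bd[OF chain_deg_finite_chain[OF assms]] show ?thesis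
    using bd_nonzero_facet by (auto simp: chain_deg_def finite_chain_def)
qed

lemma GH_zero: "0 \<in> GH H n"
  by (simp add: GH_def chain_deg_zero)

lemma GH_add:
  fixes c d :: "'v set \<Rightarrow> 'g::ab_group_add"
  assumes "c \<in> GH H n" "d \<in> GH H n" shows "c + d \<in> GH H n"
proof -
  have "\<sigma> \<in> H" if "(c + d) \<sigma> \<noteq> 0" for \<sigma>
  proof -
    have "c \<sigma> \<noteq> 0 \<or> d \<sigma> \<noteq> 0" using that by auto
    then show ?thesis using assms unfolding GH_def by blast
  qed
  with assms chain_deg_add show ?thesis unfolding GH_def by blast
qed

lemma GH_uminus: "c \<in> GH H n \<Longrightarrow> - (c :: 'v set \<Rightarrow> 'g::ab_group_add) \<in> GH H n"
  unfolding GH_def by (simp add: chain_deg_uminus)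

lemma GH_mono: "H \<subseteq> L \<Longrightarrow> GH H n \<subseteq> GH L n"
  unfolding GH_def by blast

lemma GH_Int: "GH (H \<inter> L) n = GH H n \<inter> GH L n"
  unfolding GH_def by blast

lemma Infc_finite_chain: "c \<in> Infc H n \<Longrightarrow> finite_chain c"
  unfolding Infc_def GH_def using chain_deg_finite_chain by blast

lemma Infc_zero: "0 \<in> Infc H n"
  unfolding Infc_def by (simp add: GH_zero)

lemma Infc_add:
  assumes "c \<in> Infc H n" "d \<in> Infc H n" shows "c + d \<in> Infc H n"
proof -
  have "bd (c + d) = bd c + bd d"
    using bd_add[OF assms[THEN Infc_finite_chain]] .
  with assms show ?thesis unfolding Infc_def by (simp add: GH_add)
qed

lemma Infc_uminus:
  assumes "c \<in> Infc H n" shows "- c \<in> Infc H n"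
proof -
  have "bd (- c) = - bd c"
    using bd_uminus[OF assms[THEN Infc_finite_chain]] .
  with assms show ?thesis unfolding Infc_def by (simp add: GH_uminus)
qed

lemma Infc_diff: "c \<in> Infc H n \<Longrightarrow> d \<in> Infc H n \<Longrightarrow> c - d \<in> Infc H n"
  using Infc_add[of c H n "- d"] Infc_uminus[of d H n] by simp

lemma Infc_mono: "H \<subseteq> L \<Longrightarrow> Infc H n \<subseteq> Infc L n"
  unfolding Infc_def using GH_mono by blast

lemma Infc_Int: "Infc (H \<inter> L) n = Infc H n \<inter> Infc L n"
  unfolding Infc_def GH_Int by blast

lemma Infc_bd: "c \<in> Infc H n \<Longrightarrow> bd c \<in> Infc H (n - 1)"
  using bd_bd[OF Infc_finite_chain] GH_zero unfolding Infc_def by fastforce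

definition meet_closed :: "'v set set \<Rightarrow> 'v set set \<Rightarrow> bool" where
  "meet_closed H H' \<longleftrightarrow> (\<forall>\<sigma>\<in>H. \<forall>\<sigma>'\<in>H'. \<sigma> \<inter> \<sigma>' = {} \<or> \<sigma> \<inter> \<sigma>' \<in> H \<inter> H')"

lemma meet_closed_common_facet:
  assumes "meet_closed H H'" "\<sigma> \<in> H" "\<sigma>' \<in> H'" "\<sigma>' \<notin> H" "finite \<sigma>'" "card \<sigma> = card \<sigma>'"
    and facet: "v \<in> \<sigma>" "\<sigma> - {v} = \<sigma>' - {v'}" "\<sigma> - {v} \<noteq> {}"
  shows "\<sigma> - {v} \<in> H"
proof (cases "v \<in> \<sigma>'")
  case True
  then have "\<sigma> \<subseteq> \<sigma>'" using facet by blast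
  then have "\<sigma> = \<sigma>'" using card_subset_eq assms(5,6) by metis
  with assms(2,4) show ?thesis by simp
next
  case False
  then have "\<sigma> \<inter> \<sigma>' = \<sigma> - {v}" using facet by blast
  with assms(1-3) facet(3) show ?thesis unfolding meet_closed_def by force
qed

definition restrict_chain :: "('v set \<Rightarrow> 'g::zero) \<Rightarrow> 'v set set \<Rightarrow> 'v set \<Rightarrow> 'g" where
  "restrict_chain c S \<sigma> = (if \<sigma> \<in> S then c \<sigma> else 0)"

lemma restrict_chain_deg:
  assumes "c \<in> chain_deg n" shows "restrict_chain c S \<in> chain_deg n"
proof -
  have "{\<sigma>. restrict_chain c S \<sigma> \<noteq> 0} \<subseteq> {\<sigma>. c \<sigma> \<noteq> 0}" by (simp add: restrict_chain_def Collect_mono)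
  with assms show ?thesis
    unfolding chain_deg_def by (simp add: restrict_chain_def finite_subset split: if_splits)
qed

lemma bd_restrict_chain_split:
  assumes "c \<in> chain_deg n"
  shows "bd c = bd (restrict_chain c S) + bd (restrict_chain c (- S))"
proof -
  have "bd (restrict_chain c S + restrict_chain c (- S))
      = bd (restrict_chain c S) + bd (restrict_chain c (- S))"
    by (rule bd_add; rule chain_deg_finite_chain[OF restrict_chain_deg[OF assms]])
  moreover have "restrict_chain c S + restrict_chain c (- S) = c"
    by (simp add: restrict_chain_def fun_eq_iff)
  ultimately show ?thesis by simp
qed

text \<open>A facet outside H of a simplex in H cannot lie in H', and it cannot be cancelled by the part
  of the chain supported on H' - H.\<close>
lemma bd_restrict_meet_closed:
  assumes mc: "meet_closed H H'" and c: "c \<in> Infc (H \<union> H') n"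
    and nz: "bd (restrict_chain c H) \<tau> \<noteq> 0"
  shows "\<tau> \<in> H"
proof (rule ccontr)
  assume \<tau>: "\<tau> \<notin> H"
  have c_deg: "c \<in> chain_deg n" and c_supp: "\<And>\<sigma>. c \<sigma> \<noteq> 0 \<Longrightarrow> \<sigma> \<in> H \<union> H'"
    and bdc: "\<And>\<tau>. bd c \<tau> \<noteq> 0 \<Longrightarrow> \<tau> \<in> H \<union> H'"
    using c by (auto simp: Infc_def GH_def)
  have card_c: "finite \<sigma> \<and> int (card \<sigma>) = n + 1" if "c \<sigma> \<noteq> 0" for \<sigma>
    using c_deg that by (simp add: chain_deg_def)
  from bd_nonzero_facet[OF nz]
  obtain \<sigma> v where \<sigma>: "restrict_chain c H \<sigma> \<noteq> 0" "v \<in> \<sigma>" "\<tau> = \<sigma> - {v}" and ne: "\<tau> \<noteq> {}"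
    by blast
  have \<sigma>H: "\<sigma> \<in> H" and c\<sigma>: "c \<sigma> \<noteq> 0" using \<sigma>(1) by (simp_all add: restrict_chain_def split: if_splits)
  have "\<tau> \<notin> H'"
  proof
    assume "\<tau> \<in> H'"
    moreover have "\<sigma> \<inter> \<tau> = \<tau>" using \<sigma>(3) by blast
    ultimately have "\<tau> \<in> H \<inter> H'" using mc \<sigma>H ne unfolding meet_closed_def by metis
    with \<tau> show False by blast
  qed
  have "bd (restrict_chain c (- H)) \<tau> = 0"
  proof (rule ccontr)
    assume "bd (restrict_chain c (- H)) \<tau> \<noteq> 0"
    from bd_nonzero_facet[OF this]
    obtain \<sigma>' v' where \<sigma>': "restrict_chain c (- H) \<sigma>' \<noteq> 0" "\<tau> = \<sigma>' - {v'}"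
      by blast
    have "c \<sigma>' \<noteq> 0" "\<sigma>' \<notin> H" using \<sigma>'(1) by (simp_all add: restrict_chain_def split: if_splits)
    with c_supp have "\<sigma>' \<in> H'" by blast
    have "card \<sigma> = card \<sigma>'"
      using card_c[OF c\<sigma>] card_c[OF \<open>c \<sigma>' \<noteq> 0\<close>] by simp
    with meet_closed_common_facet[OF mc \<sigma>H \<open>\<sigma>' \<in> H'\<close> \<open>\<sigma>' \<notin> H\<close>] card_c[OF \<open>c \<sigma>' \<noteq> 0\<close>]
    have "\<sigma> - {v} \<in> H" using \<sigma>(2,3) \<sigma>'(2) ne by blast
    with \<tau> \<sigma>(3) show False by blast
  qed
  with nz bd_restrict_chain_split[OF c_deg, of H] have "bd c \<tau> \<noteq> 0" by simp
  with bdc \<tau> \<open>\<tau> \<notin> H'\<close> show False by blast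
qed

lemma Infc_Un_split:
  assumes mc: "meet_closed H H'" and c: "c \<in> Infc (H \<union> H') n"
  obtains x y where "x \<in> Infc H n" "y \<in> Infc H' n" "c = x + y"
proof -
  let ?x = "restrict_chain c H" and ?y = "restrict_chain c (- H)"
  have c_deg: "c \<in> chain_deg n" and c_supp: "\<And>\<sigma>. c \<sigma> \<noteq> 0 \<Longrightarrow> \<sigma> \<in> H \<union> H'"
    and bdc: "\<And>\<tau>. bd c \<tau> \<noteq> 0 \<Longrightarrow> \<tau> \<in> H \<union> H'"
    using c by (auto simp: Infc_def GH_def)
  have bdx: "bd ?x \<tau> \<noteq> 0 \<Longrightarrow> \<tau> \<in> H" for \<tau>
    by (rule bd_restrict_meet_closed[OF mc c])
  have bdy: "\<tau> \<in> H'" if nz: "bd ?y \<tau> \<noteq> 0" for \<tau>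
  proof (rule ccontr)
    assume "\<tau> \<notin> H'"
    from bd_nonzero_facet[OF nz]
    obtain \<sigma>' v' where \<sigma>': "?y \<sigma>' \<noteq> 0" "\<tau> = \<sigma>' - {v'}" and ne: "\<tau> \<noteq> {}"
      by blast
    have "\<sigma>' \<in> H'" using c_supp \<sigma>'(1) by (auto simp: restrict_chain_def split: if_splits)
    have "\<tau> \<notin> H"
    proof
      assume "\<tau> \<in> H"
      moreover have "\<tau> \<inter> \<sigma>' = \<tau>" using \<sigma>'(2) by blast
      ultimately have "\<tau> \<in> H \<inter> H'" using mc \<open>\<sigma>' \<in> H'\<close> ne unfolding meet_closed_def by metis
      with \<open>\<tau> \<notin> H'\<close> show False by blast
    qed
    with \<open>\<tau> \<notin> H'\<close> bdc have "bd c \<tau> = 0" by blast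
    with nz bd_restrict_chain_split[OF c_deg, of H] have "bd ?x \<tau> \<noteq> 0" by (simp add: add_eq_0_iff)
    with bdx \<open>\<tau> \<notin> H\<close> show False by blast
  qed
  have "?x \<in> Infc H n"
    using restrict_chain_deg[OF c_deg] chain_deg_bd[OF restrict_chain_deg[OF c_deg]] bdx
    by (simp add: Infc_def GH_def restrict_chain_def)
  moreover have "?y \<in> Infc H' n"
    using restrict_chain_deg[OF c_deg] chain_deg_bd[OF restrict_chain_deg[OF c_deg]] bdy c_supp
    by (simp add: Infc_def GH_def restrict_chain_def) blast
  moreover have "c = ?x + ?y" by (simp add: restrict_chain_def fun_eq_iff)
  ultimately show ?thesis by (rule that)
qed

section \<open>Relative embedded homology through representatives\<close>

definition add_subgroup :: "'a::ab_group_add set \<Rightarrow> bool" where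
  "add_subgroup J \<longleftrightarrow> 0 \<in> J \<and> (\<forall>x\<in>J. \<forall>y\<in>J. x + y \<in> J) \<and> (\<forall>x\<in>J. - x \<in> J)"

definition coset :: "'a::ab_group_add set \<Rightarrow> 'a \<Rightarrow> 'a set" where
  "coset J c = (\<lambda>j. j + c) ` J"

lemma add_subgroup_diff: "add_subgroup J \<Longrightarrow> x \<in> J \<Longrightarrow> y \<in> J \<Longrightarrow> x - y \<in> J"
  unfolding add_subgroup_def by (metis diff_conv_add_uminus)

lemma mem_coset_iff: "x \<in> coset J c \<longleftrightarrow> x - c \<in> J"
  unfolding coset_def by (auto intro: image_eqI[of _ _ "x - c"])

lemma mem_coset_self: "add_subgroup J \<Longrightarrow> c \<in> coset J c"
  by (simp add: mem_coset_iff add_subgroup_def)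

lemma coset_zero [simp]: "coset J 0 = J"
  by (simp add: coset_def)

lemma coset_eq_iff:
  assumes J: "add_subgroup J" shows "coset J c = coset J d \<longleftrightarrow> c - d \<in> J"
proof
  assume "coset J c = coset J d"
  then show "c - d \<in> J" using mem_coset_self[OF J, of c] by (simp add: mem_coset_iff)
next
  assume cd: "c - d \<in> J"
  have "x - c \<in> J \<longleftrightarrow> x - d \<in> J" for x
  proof
    assume "x - c \<in> J"
    moreover have "x - d = (x - c) + (c - d)" by simp
    ultimately show "x - d \<in> J" using cd J unfolding add_subgroup_def by metis
  next
    assume "x - d \<in> J"
    moreover have "x - c = (x - d) - (c - d)" by simp
    ultimately show "x - c \<in> J" using cd add_subgroup_diff[OF J] by metis
  qed
  then show "coset J c = coset J d" by (auto simp: mem_coset_iff)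
qed

lemma coset_plus:
  assumes J: "add_subgroup J"
  shows "{h + k | h k. h \<in> coset J c \<and> k \<in> coset J d} = coset J (c + d)"
proof (intro subsetI equalityI)
  fix x assume "x \<in> {h + k | h k. h \<in> coset J c \<and> k \<in> coset J d}"
  then obtain h k where "h - c \<in> J" "k - d \<in> J" "x = h + k" by (auto simp: mem_coset_iff)
  moreover have "h + k - (c + d) = (h - c) + (k - d)" by simp
  ultimately show "x \<in> coset J (c + d)"
    using J unfolding add_subgroup_def mem_coset_iff by metis
next
  fix x assume "x \<in> coset J (c + d)"
  then have "x - d \<in> coset J c" "d \<in> coset J d"
    using mem_coset_self[OF J] by (simp_all add: mem_coset_iff diff_diff_eq add.commute)
  moreover have "x = (x - d) + d" by simp
  ultimately show "x \<in> {h + k | h k. h \<in> coset J c \<and> k \<in> coset J d}" by blast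
qed

lemma Infc_add_subgroup: "add_subgroup (Infc A n)"
  unfolding add_subgroup_def using Infc_zero Infc_add Infc_uminus by blast

lemma Inf_grp_mult: "x \<otimes>\<^bsub>Inf_grp H n\<^esub> y = x + y"
  by (simp add: Inf_grp_def plus_fun_def)

lemma r_coset_Inf_grp: "J #>\<^bsub>Inf_grp H n\<^esub> c = coset J c"
  unfolding r_coset_def coset_def by (auto simp: Inf_grp_mult)

lemma set_mult_Inf_grp: "P <#>\<^bsub>Inf_grp H n\<^esub> Q = {h + k | h k. h \<in> P \<and> k \<in> Q}"
  unfolding set_mult_def by (auto simp: Inf_grp_mult)

lemma Qgrp_simps:
  "carrier (Qgrp H A n) = coset (Infc A n) ` Infc H n"
  "monoid.mult (Qgrp H A n) = set_mult (Inf_grp H n)"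
  "\<one>\<^bsub>Qgrp H A n\<^esub> = Infc A n"
  unfolding Qgrp_def FactGroup_def RCOSETS_def r_coset_Inf_grp by (auto simp: Inf_grp_def)

lemma qbd_coset:
  assumes c: "finite_chain c"
  shows "qbd H A n (coset (Infc A n) c) = coset (Infc A (n - 1)) (bd c)"
proof -
  let ?x = "SOME x. x \<in> coset (Infc A n) c"
  have "?x \<in> coset (Infc A n) c"
    by (rule someI[where x = c]) (rule mem_coset_self[OF Infc_add_subgroup])
  then have j: "?x - c \<in> Infc A n" by (simp add: mem_coset_iff)
  have "bd ?x = bd (?x - c) + bd c"
    using bd_add[OF Infc_finite_chain[OF j] c] by simp
  with Infc_bd[OF j] have "bd ?x - bd c \<in> Infc A (n - 1)" by simp
  then show ?thesis
    unfolding qbd_def r_coset_Inf_grp by (simp add: coset_eq_iff[OF Infc_add_subgroup])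
qed

definition rel_cycles :: "'v::linorder set set \<Rightarrow> 'v set set \<Rightarrow> int \<Rightarrow> ('v set \<Rightarrow> 'g::ab_group_add) set"
  where "rel_cycles H A n = {c \<in> Infc H n. bd c \<in> Infc A (n - 1)}"

definition rel_boundaries :: "'v::linorder set set \<Rightarrow> 'v set set \<Rightarrow> int \<Rightarrow> ('v set \<Rightarrow> 'g::ab_group_add) set"
  where "rel_boundaries H A n = {j + bd d | j d. j \<in> Infc A n \<and> d \<in> Infc H (n + 1)}"

lemma Zrel_eq: "Zrel H A n = coset (Infc A n) ` rel_cycles H A n"
proof -
  have "qbd H A n (coset (Infc A n) c) = Infc A (n - 1) \<longleftrightarrow> bd c \<in> Infc A (n - 1)"
    if "c \<in> Infc H n" for c
    using qbd_coset[OF Infc_finite_chain[OF that]] coset_eq_iff[OF Infc_add_subgroup, where c = "bd c" and d = 0]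
    by simp
  then show ?thesis unfolding Zrel_def kernel_def Qgrp_simps rel_cycles_def by auto
qed

lemma Brel_eq: "Brel H A n = (\<lambda>d. coset (Infc A n) (bd d)) ` Infc H (n + 1)"
  unfolding Brel_def Qgrp_simps image_image
  by (intro image_cong refl) (simp add: qbd_coset Infc_finite_chain)

lemma hcls_image_bd: "hcls H A n c = (\<lambda>d. coset (Infc A n) (bd d + c)) ` Infc H (n + 1)"
  unfolding hcls_def r_coset_Inf_grp unfolding r_coset_def Brel_eq
  by (auto simp: Qgrp_simps set_mult_Inf_grp coset_plus[OF Infc_add_subgroup])

lemma rel_hom_carrier: "carrier (rel_hom H A n) = hcls H A n ` rel_cycles H A n"
  unfolding rel_hom_def FactGroup_def RCOSETS_def by (auto simp: Zrel_eq hcls_def r_coset_Inf_grp)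

lemma rel_hom_one: "\<one>\<^bsub>rel_hom H A n\<^esub> = hcls H A n 0"
  unfolding rel_hom_def FactGroup_def by (simp add: Brel_eq hcls_image_bd)

lemma rel_boundaries_add_subgroup: "add_subgroup (rel_boundaries H A n)"
proof -
  let ?B = "rel_boundaries H A n"
  have "0 \<in> ?B"
    unfolding rel_boundaries_def using Infc_zero[of A n] Infc_zero[of H "n + 1"] by force
  moreover have "x + y \<in> ?B" if xy: "x \<in> ?B" "y \<in> ?B" for x y
  proof -
    obtain j d j' d' where jd: "j \<in> Infc A n" "d \<in> Infc H (n + 1)" "x = j + bd d"
      and jd': "j' \<in> Infc A n" "d' \<in> Infc H (n + 1)" "y = j' + bd d'"
      using xy unfolding rel_boundaries_def by blast
    have "x + y = (j + j') + bd (d + d')"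
      using jd jd' bd_add[OF jd(2)[THEN Infc_finite_chain] jd'(2)[THEN Infc_finite_chain]]
      by (simp add: algebra_simps)
    then show ?thesis
      unfolding rel_boundaries_def using Infc_add[OF jd(1) jd'(1)] Infc_add[OF jd(2) jd'(2)] by blast
  qed
  moreover have "- x \<in> ?B" if x: "x \<in> ?B" for x
  proof -
    obtain j d where jd: "j \<in> Infc A n" "d \<in> Infc H (n + 1)" "x = j + bd d"
      using x unfolding rel_boundaries_def by blast
    have "- x = - j + bd (- d)"
      using jd bd_uminus[OF jd(2)[THEN Infc_finite_chain]] by simp
    then show ?thesis
      unfolding rel_boundaries_def using Infc_uminus[OF jd(1)] Infc_uminus[OF jd(2)] by blast
  qed
  ultimately show ?thesis unfolding add_subgroup_def by blast
qed

lemma rel_boundariesI: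
  "j \<in> Infc A n \<Longrightarrow> d \<in> Infc H (n + 1) \<Longrightarrow> j + bd d \<in> rel_boundaries H A n"
  unfolding rel_boundaries_def by blast

lemma Infc_subset_rel_boundaries: "Infc A n \<subseteq> rel_boundaries H A n"
  using rel_boundariesI[OF _ Infc_zero] by fastforce

lemma bd_mem_rel_boundaries: "d \<in> Infc H (n + 1) \<Longrightarrow> bd d \<in> rel_boundaries H A n"
  using rel_boundariesI[OF Infc_zero] by fastforce

lemma rel_boundaries_mono: "H \<subseteq> L \<Longrightarrow> A \<subseteq> C \<Longrightarrow> rel_boundaries H A n \<subseteq> rel_boundaries L C n"
  unfolding rel_boundaries_def using Infc_mono by blast

lemma hcls_eq_coset:
  "hcls H A n c = coset (Infc A n) ` coset (rel_boundaries H A n) c"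
proof -
  let ?J = "Infc A n" and ?B = "rel_boundaries H A n"
  have "coset ?J (bd d + c) \<in> coset ?J ` coset ?B c" if "d \<in> Infc H (n + 1)" for d
    using bd_mem_rel_boundaries[OF that] by (simp add: mem_coset_iff)
  moreover have "coset ?J v \<in> hcls H A n c" if v: "v \<in> coset ?B c" for v
  proof -
    obtain j d where jd: "j \<in> ?J" "d \<in> Infc H (n + 1)" "v - c = j + bd d"
      using v unfolding mem_coset_iff rel_boundaries_def by blast
    then have "coset ?J v = coset ?J (bd d + c)"
      by (simp add: coset_eq_iff[OF Infc_add_subgroup] algebra_simps)
    with jd(2) show ?thesis unfolding hcls_image_bd by blast
  qed
  ultimately show ?thesis unfolding hcls_image_bd by blast
qed

lemma Union_hcls: "\<Union>(hcls H A n c) = coset (rel_boundaries H A n) c"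
proof -
  let ?J = "Infc A n" and ?B = "rel_boundaries H A n"
  have "x \<in> coset ?B c" if "x \<in> coset ?J v" "v \<in> coset ?B c" for x v
  proof -
    have "x - v \<in> ?B" using that(1) Infc_subset_rel_boundaries by (auto simp: mem_coset_iff)
    moreover have "x - c = (x - v) + (v - c)" by simp
    ultimately show ?thesis
      using that(2) rel_boundaries_add_subgroup unfolding mem_coset_iff add_subgroup_def by metis
  qed
  moreover have "x \<in> coset ?J x" for x by (rule mem_coset_self[OF Infc_add_subgroup])
  ultimately show ?thesis unfolding hcls_eq_coset by blast
qed

lemma hcls_eq_iff: "hcls H A n c = hcls H A n c' \<longleftrightarrow> c - c' \<in> rel_boundaries H A n"
proof
  let ?B = "rel_boundaries H A n"
  assume "hcls H A n c = hcls H A n c'"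
  then have "c \<in> coset ?B c'"
    using Union_hcls mem_coset_self[OF rel_boundaries_add_subgroup] by metis
  then show "c - c' \<in> ?B" by (simp add: mem_coset_iff)
next
  assume "c - c' \<in> rel_boundaries H A n"
  then have "coset (rel_boundaries H A n) c = coset (rel_boundaries H A n) c'"
    by (simp add: coset_eq_iff[OF rel_boundaries_add_subgroup])
  then show "hcls H A n c = hcls H A n c'" by (simp add: hcls_eq_coset)
qed

lemma rel_hom_mult: "hcls H A n c \<otimes>\<^bsub>rel_hom H A n\<^esub> hcls H A n c' = hcls H A n (c + c')"
proof -
  let ?J = "Infc A n" and ?B = "rel_boundaries H A n"
  have "hcls H A n c \<otimes>\<^bsub>rel_hom H A n\<^esub> hcls H A n c'
      = {coset ?J v <#>\<^bsub>Inf_grp H n\<^esub> coset ?J v' | v v'. v \<in> coset ?B c \<and> v' \<in> coset ?B c'}"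
    unfolding rel_hom_def FactGroup_def hcls_eq_coset set_mult_def[of "(Qgrp H A n)\<lparr>carrier := Zrel H A n\<rparr>"]
    by (auto simp: Qgrp_simps)
  also have "\<dots> = coset ?J ` {v + v' | v v'. v \<in> coset ?B c \<and> v' \<in> coset ?B c'}"
    by (auto simp: set_mult_Inf_grp coset_plus[OF Infc_add_subgroup])
  also have "\<dots> = hcls H A n (c + c')"
    by (simp add: hcls_eq_coset coset_plus[OF rel_boundaries_add_subgroup])
  finally show ?thesis .
qed

lemma rel_cycles_add:
  assumes "c \<in> rel_cycles H A n" "d \<in> rel_cycles H A n" shows "c + d \<in> rel_cycles H A n"
proof -
  have "bd (c + d) = bd c + bd d"
    using assms bd_add Infc_finite_chain unfolding rel_cycles_def by blast
  with assms show ?thesis unfolding rel_cycles_def by (simp add: Infc_add)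
qed

lemma rel_cycles_uminus:
  assumes "c \<in> rel_cycles H A n" shows "- c \<in> rel_cycles H A n"
proof -
  have "bd (- c) = - bd c"
    using assms bd_uminus Infc_finite_chain unfolding rel_cycles_def by blast
  with assms show ?thesis unfolding rel_cycles_def by (simp add: Infc_uminus)
qed

lemma rel_cycles_diff: "c \<in> rel_cycles H A n \<Longrightarrow> d \<in> rel_cycles H A n \<Longrightarrow> c - d \<in> rel_cycles H A n"
  using rel_cycles_add[of c H A n "- d"] rel_cycles_uminus[of d H A n] by simp

lemma rel_cycles_mono: "H \<subseteq> L \<Longrightarrow> A \<subseteq> C \<Longrightarrow> rel_cycles H A n \<subseteq> rel_cycles L C n"
  unfolding rel_cycles_def using Infc_mono by blast

lemma rel_cycles_Int: "rel_cycles (H \<inter> H') (A \<inter> A') n = rel_cycles H A n \<inter> rel_cycles H' A' n"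
  unfolding rel_cycles_def Infc_Int by blast

lemma bd_mem_rel_cycles:
  assumes "c \<in> Infc H n" shows "bd c \<in> rel_cycles H A (n - 1)"
proof -
  have "bd (bd c) = 0" by (rule bd_bd[OF Infc_finite_chain[OF assms]])
  then show ?thesis unfolding rel_cycles_def using Infc_bd[OF assms] Infc_zero by simp
qed

lemma Infc_subset_rel_cycles: "A \<subseteq> H \<Longrightarrow> Infc A n \<subseteq> rel_cycles H A n"
  unfolding rel_cycles_def using Infc_mono Infc_bd by blast

lemma rel_boundaries_subset_rel_cycles:
  assumes "A \<subseteq> H" shows "rel_boundaries H A n \<subseteq> rel_cycles H A n"
proof
  fix b assume "b \<in> rel_boundaries H A n"
  then obtain j d where "j \<in> Infc A n" "d \<in> Infc H (n + 1)" "b = j + bd d"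
    unfolding rel_boundaries_def by blast
  moreover have "bd d \<in> rel_cycles H A n" using bd_mem_rel_cycles[of d H "n + 1" A] \<open>d \<in> _\<close> by simp
  ultimately show "b \<in> rel_cycles H A n"
    using Infc_subset_rel_cycles[OF assms] rel_cycles_add by blast
qed

lemma rel_hom_inv:
  assumes c: "c \<in> rel_cycles H A n"
  shows "inv\<^bsub>rel_hom H A n\<^esub> (hcls H A n c) = hcls H A n (- c)"
  unfolding m_inv_def
proof (rule the_equality)
  show "hcls H A n (- c) \<in> carrier (rel_hom H A n) \<and>
     hcls H A n c \<otimes>\<^bsub>rel_hom H A n\<^esub> hcls H A n (- c) = \<one>\<^bsub>rel_hom H A n\<^esub> \<and>
     hcls H A n (- c) \<otimes>\<^bsub>rel_hom H A n\<^esub> hcls H A n c = \<one>\<^bsub>rel_hom H A n\<^esub>"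
    using rel_cycles_uminus[OF c] by (simp add: rel_hom_carrier rel_hom_mult rel_hom_one)
next
  fix y assume y: "y \<in> carrier (rel_hom H A n) \<and>
     hcls H A n c \<otimes>\<^bsub>rel_hom H A n\<^esub> y = \<one>\<^bsub>rel_hom H A n\<^esub> \<and>
     y \<otimes>\<^bsub>rel_hom H A n\<^esub> hcls H A n c = \<one>\<^bsub>rel_hom H A n\<^esub>"
  then obtain e where e: "y = hcls H A n e" unfolding rel_hom_carrier by blast
  with y have "c + e \<in> rel_boundaries H A n"
    by (simp add: rel_hom_mult rel_hom_one hcls_eq_iff)
  then show "y = hcls H A n (- c)" by (simp add: e hcls_eq_iff add.commute)
qed

lemma ind_map_hcls:
  fixes c :: "'v::linorder set \<Rightarrow> 'g::ab_group_add"
  assumes "rel_boundaries H A n \<subseteq> (rel_boundaries L C n :: ('v set \<Rightarrow> 'g) set)"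
  shows "ind_map L C n (hcls H A n c) = hcls L C n c"
proof -
  let ?x = "SOME x. x \<in> \<Union>(hcls H A n c)"
  have "?x \<in> coset (rel_boundaries H A n) c"
    unfolding Union_hcls by (rule someI[where x = c]) (rule mem_coset_self[OF rel_boundaries_add_subgroup])
  with assms have "?x - c \<in> rel_boundaries L C n" by (auto simp: mem_coset_iff)
  then show ?thesis unfolding ind_map_def by (simp add: hcls_eq_iff)
qed

lemma hom_via_representatives:
  assumes "carrier K = cls ` Z"
    and "\<And>a b. a \<in> Z \<Longrightarrow> b \<in> Z \<Longrightarrow> cls a \<otimes>\<^bsub>K\<^esub> cls b = cls (combine a b)"
    and "\<And>a. a \<in> Z \<Longrightarrow> f (cls a) \<in> carrier G"
    and "\<And>a b. a \<in> Z \<Longrightarrow> b \<in> Z \<Longrightarrow> f (cls (combine a b)) = f (cls a) \<otimes>\<^bsub>G\<^esub> f (cls b)"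
  shows "f \<in> hom K G"
  unfolding hom_def using assms by auto

lemma rel_hom_homI:
  assumes "\<And>c. c \<in> rel_cycles H A n \<Longrightarrow> f (hcls H A n c) \<in> carrier G"
    and "\<And>c c'. c \<in> rel_cycles H A n \<Longrightarrow> c' \<in> rel_cycles H A n \<Longrightarrow>
           f (hcls H A n (c + c')) = f (hcls H A n c) \<otimes>\<^bsub>G\<^esub> f (hcls H A n c')"
  shows "f \<in> hom (rel_hom H A n) G"
  using assms by (intro hom_via_representatives[OF rel_hom_carrier, where combine = plus])
    (simp_all add: rel_hom_mult)

section \<open>The Mayer--Vietoris sequence\<close>

lemma hcls_eq_one_iff: "hcls H A n c = \<one>\<^bsub>rel_hom H A n\<^esub> \<longleftrightarrow> c \<in> rel_boundaries H A n"
  by (simp add: rel_hom_one hcls_eq_iff)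

lemma mv_alpha_hcls:
  fixes c :: "'v::linorder set \<Rightarrow> 'g::ab_group_add"
  shows "mv_alpha H A H' A' n (hcls (H \<inter> H') (A \<inter> A') n c) = (hcls H A n c, hcls H' A' n c)"
  unfolding mv_alpha_def by (simp add: ind_map_hcls rel_boundaries_mono)

lemma mv_beta_hcls:
  assumes "x \<in> rel_cycles H A n" "y \<in> rel_cycles H' A' n"
  shows "mv_beta H A H' A' n (hcls H A n x, hcls H' A' n y) = hcls (H \<union> H') (A \<union> A') n (x - y)"
proof -
  have "y \<in> rel_cycles (H \<union> H') (A \<union> A') n"
    using assms(2) rel_cycles_mono[of H' "H \<union> H'" A' "A \<union> A'"] by blast
  then show ?thesis
    unfolding mv_beta_def by (simp add: ind_map_hcls rel_boundaries_mono rel_hom_inv rel_hom_mult)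
qed

lemma mv_alpha_hom:
  "mv_alpha H A H' A' n \<in> hom (rel_hom (H \<inter> H') (A \<inter> A') n) (rel_hom H A n \<times>\<times> rel_hom H' A' n)"
  by (rule rel_hom_homI) (simp_all add: mv_alpha_hcls rel_hom_carrier rel_hom_mult rel_cycles_Int)

lemma mv_beta_hom:
  fixes H A H' A' :: "'v::linorder set set"
  shows "mv_beta H A H' A' n \<in> hom (rel_hom H A n \<times>\<times> rel_hom H' A' n)
    (rel_hom (H \<union> H') (A \<union> A') n :: ('v set \<Rightarrow> 'g::ab_group_add) set set monoid)"
proof (rule hom_via_representatives[where combine = "\<lambda>p q. (fst p + fst q, snd p + snd q)"])
  show "carrier (rel_hom H A n \<times>\<times> rel_hom H' A' n)
      = map_prod (hcls H A n) (hcls H' A' n) ` (rel_cycles H A n \<times> rel_cycles H' A' n)"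
    by (simp add: rel_hom_carrier map_prod_surj_on)
  have Un: "rel_cycles H A n \<subseteq> rel_cycles (H \<union> H') (A \<union> A') n"
    "rel_cycles H' A' n \<subseteq> rel_cycles (H \<union> H') (A \<union> A') n"
    by (simp_all add: rel_cycles_mono)
  fix p q :: "('v set \<Rightarrow> 'g) \<times> ('v set \<Rightarrow> 'g)" assume p: "p \<in> rel_cycles H A n \<times> rel_cycles H' A' n"
    and q: "q \<in> rel_cycles H A n \<times> rel_cycles H' A' n"
  show "mv_beta H A H' A' n (map_prod (hcls H A n) (hcls H' A' n) p) \<in> carrier (rel_hom (H \<union> H') (A \<union> A') n)"
  proof -
    obtain x y where xy: "p = (x, y)" "x \<in> rel_cycles H A n" "y \<in> rel_cycles H' A' n"
      using p by blast
    then have "x - y \<in> rel_cycles (H \<union> H') (A \<union> A') n" using Un by (blast intro: rel_cycles_diff)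
    with xy show ?thesis by (simp add: mv_beta_hcls rel_hom_carrier)
  qed
  show "map_prod (hcls H A n) (hcls H' A' n) p \<otimes>\<^bsub>rel_hom H A n \<times>\<times> rel_hom H' A' n\<^esub>
      map_prod (hcls H A n) (hcls H' A' n) q
    = map_prod (hcls H A n) (hcls H' A' n) (fst p + fst q, snd p + snd q)"
    by (simp add: map_prod_def split_beta rel_hom_mult)
  obtain x y x' y' where "p = (x, y)" "q = (x', y')"
    and x: "x \<in> rel_cycles H A n" "x' \<in> rel_cycles H A n"
    and y: "y \<in> rel_cycles H' A' n" "y' \<in> rel_cycles H' A' n"
    using p q by blast
  then show "mv_beta H A H' A' n (map_prod (hcls H A n) (hcls H' A' n) (fst p + fst q, snd p + snd q))
    = mv_beta H A H' A' n (map_prod (hcls H A n) (hcls H' A' n) p) \<otimes>\<^bsub>rel_hom (H \<union> H') (A \<union> A') n\<^esub>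
      mv_beta H A H' A' n (map_prod (hcls H A n) (hcls H' A' n) q)"
    by (simp add: mv_beta_hcls rel_cycles_add rel_hom_mult diff_add_eq add_diff_eq diff_diff_eq)
qed

lemma rel_boundaries_Un_split:
  assumes "meet_closed H H'" "meet_closed A A'" and v: "v \<in> rel_boundaries (H \<union> H') (A \<union> A') n"
  obtains u u' where "u \<in> rel_boundaries H A n" "u' \<in> rel_boundaries H' A' n" "v = u + u'"
proof -
  obtain j d where j: "j \<in> Infc (A \<union> A') n" and d: "d \<in> Infc (H \<union> H') (n + 1)" and "v = j + bd d"
    using v unfolding rel_boundaries_def by blast
  obtain a a' where "a \<in> Infc A n" "a' \<in> Infc A' n" "j = a + a'"
    using Infc_Un_split[OF assms(2) j] .
  moreover obtain e e' where "e \<in> Infc H (n + 1)" "e' \<in> Infc H' (n + 1)" "d = e + e'"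
    using Infc_Un_split[OF assms(1) d] .
  moreover have "bd d = bd e + bd e'"
    using bd_add Infc_finite_chain calculation by blast
  ultimately have "v = (a + bd e) + (a' + bd e')" "a + bd e \<in> rel_boundaries H A n"
    "a' + bd e' \<in> rel_boundaries H' A' n"
    using \<open>v = j + bd d\<close> by (simp_all add: rel_boundariesI algebra_simps)
  then show ?thesis using that by blast
qed

locale mayer_vietoris =
  fixes H A H' A' :: "'v::linorder set set"
  assumes A_subset: "A \<subseteq> H" and A'_subset: "A' \<subseteq> H'"
    and meet_H: "meet_closed H H'" and meet_A: "meet_closed A A'"
begin

text \<open>w represents the image of the class of z under the connecting homomorphism.\<close>
definition connecting_rep :: "int \<Rightarrow> ('v set \<Rightarrow> 'g::ab_group_add) \<Rightarrow> ('v set \<Rightarrow> 'g) \<Rightarrow> bool" where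
  "connecting_rep n z w \<longleftrightarrow> (\<exists>x y. x \<in> Infc H n \<and> y \<in> Infc H' n \<and> z = x - y \<and>
      bd x - w \<in> Infc A (n - 1) \<and> bd y - w \<in> Infc A' (n - 1))"

lemma connecting_repI:
  "x \<in> Infc H n \<Longrightarrow> y \<in> Infc H' n \<Longrightarrow> bd x - w \<in> Infc A (n - 1) \<Longrightarrow> bd y - w \<in> Infc A' (n - 1)
    \<Longrightarrow> connecting_rep n (x - y) w"
  unfolding connecting_rep_def by blast

lemma connecting_repE:
  assumes "connecting_rep n z w"
  obtains x y where "x \<in> Infc H n" "y \<in> Infc H' n" "z = x - y"
    "bd x - w \<in> Infc A (n - 1)" "bd y - w \<in> Infc A' (n - 1)"
  using assms unfolding connecting_rep_def by blast

lemma connecting_rep_exists: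
  assumes z: "z \<in> rel_cycles (H \<union> H') (A \<union> A') n"
  obtains w where "connecting_rep n z w"
proof -
  obtain x y where x: "x \<in> Infc H n" and y: "y \<in> Infc H' n" and "z = x + y"
    using Infc_Un_split[OF meet_H] z unfolding rel_cycles_def by blast
  obtain a a' where a: "a \<in> Infc A (n - 1)" and a': "a' \<in> Infc A' (n - 1)" and "bd z = a + a'"
    using Infc_Un_split[OF meet_A] z unfolding rel_cycles_def by blast
  have "bd z = bd x + bd y"
    using bd_add[OF x[THEN Infc_finite_chain] y[THEN Infc_finite_chain]] \<open>z = x + y\<close> by simp
  then have "bd (- y) - (bd x - a) = - a'"
    using bd_uminus[OF y[THEN Infc_finite_chain]] \<open>bd z = a + a'\<close> by (simp add: algebra_simps)
  then have "connecting_rep n (x - - y) (bd x - a)"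
    using a a' by (intro connecting_repI[OF x Infc_uminus[OF y]]) (simp_all add: Infc_uminus)
  with \<open>z = x + y\<close> show ?thesis using that by simp
qed

lemma connecting_rep_rel_cycle:
  assumes "connecting_rep n z w" shows "w \<in> rel_cycles (H \<inter> H') (A \<inter> A') (n - 1)"
proof -
  obtain x y where x: "x \<in> Infc H n" and y: "y \<in> Infc H' n"
    and a: "bd x - w \<in> Infc A (n - 1)" and a': "bd y - w \<in> Infc A' (n - 1)"
    using assms by (rule connecting_repE)
  have "bd x - (bd x - w) \<in> rel_cycles H A (n - 1)"
    using bd_mem_rel_cycles[OF x] Infc_subset_rel_cycles[OF A_subset] a by (blast intro: rel_cycles_diff)
  moreover have "bd y - (bd y - w) \<in> rel_cycles H' A' (n - 1)"
    using bd_mem_rel_cycles[OF y] Infc_subset_rel_cycles[OF A'_subset] a' by (blast intro: rel_cycles_diff)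
  ultimately show ?thesis by (simp add: rel_cycles_Int)
qed

lemma connecting_rep_add:
  assumes "connecting_rep n z w" "connecting_rep n z' w'"
  shows "connecting_rep n (z + z') (w + w')"
proof -
  obtain x y where x: "x \<in> Infc H n" "y \<in> Infc H' n" "z = x - y"
    "bd x - w \<in> Infc A (n - 1)" "bd y - w \<in> Infc A' (n - 1)"
    using assms(1) by (rule connecting_repE)
  obtain x' y' where x': "x' \<in> Infc H n" "y' \<in> Infc H' n" "z' = x' - y'"
    "bd x' - w' \<in> Infc A (n - 1)" "bd y' - w' \<in> Infc A' (n - 1)"
    using assms(2) by (rule connecting_repE)
  have "bd (x + x') - (w + w') = (bd x - w) + (bd x' - w')"
    using bd_add[OF x(1)[THEN Infc_finite_chain] x'(1)[THEN Infc_finite_chain]] by simp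
  then have "bd (x + x') - (w + w') \<in> Infc A (n - 1)" using Infc_add[OF x(4) x'(4)] by (simp only:)
  have "bd (y + y') - (w + w') = (bd y - w) + (bd y' - w')"
    using bd_add[OF x(2)[THEN Infc_finite_chain] x'(2)[THEN Infc_finite_chain]] by simp
  then have "bd (y + y') - (w + w') \<in> Infc A' (n - 1)" using Infc_add[OF x(5) x'(5)] by (simp only:)
  with \<open>bd (x + x') - (w + w') \<in> _\<close> have "connecting_rep n ((x + x') - (y + y')) (w + w')"
    using x x' by (intro connecting_repI) (simp_all add: Infc_add)
  moreover have "(x + x') - (y + y') = z + z'" unfolding x(3) x'(3) by (simp add: algebra_simps)
  ultimately show ?thesis by simp
qed

lemma connecting_rep_uminus:
  assumes "connecting_rep n z w" shows "connecting_rep n (- z) (- w)"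
proof -
  obtain x y where x: "x \<in> Infc H n" "y \<in> Infc H' n" "z = x - y"
    "bd x - w \<in> Infc A (n - 1)" "bd y - w \<in> Infc A' (n - 1)"
    using assms by (rule connecting_repE)
  have "bd (- x) - - w = - (bd x - w)" "bd (- y) - - w = - (bd y - w)"
    using bd_uminus x(1,2)[THEN Infc_finite_chain] by simp_all
  then have "bd (- x) - - w \<in> Infc A (n - 1)" "bd (- y) - - w \<in> Infc A' (n - 1)"
    using Infc_uminus[OF x(4)] Infc_uminus[OF x(5)] by (simp_all only:)
  then have "connecting_rep n (- x - - y) (- w)"
    by (intro connecting_repI Infc_uminus x(1,2))
  then show ?thesis using x(3) by simp
qed

lemma connecting_rep_boundary:
  assumes rep: "connecting_rep n z w" and z: "z \<in> rel_boundaries (H \<union> H') (A \<union> A') n"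
  shows "w \<in> rel_boundaries (H \<inter> H') (A \<inter> A') (n - 1)"
proof -
  obtain x y where x: "x \<in> Infc H n" and y: "y \<in> Infc H' n" and "z = x - y"
    and a: "bd x - w \<in> Infc A (n - 1)" and a': "bd y - w \<in> Infc A' (n - 1)"
    using rep by (rule connecting_repE)
  obtain u u' where "u \<in> rel_boundaries H A n" "u' \<in> rel_boundaries H' A' n" "z = u + u'"
    by (rule rel_boundaries_Un_split[OF meet_H meet_A z])
  then have u: "u \<in> Infc H n" "bd u \<in> Infc A (n - 1)"
    and u': "u' \<in> Infc H' n" "bd u' \<in> Infc A' (n - 1)"
    using rel_boundaries_subset_rel_cycles[OF A_subset] rel_boundaries_subset_rel_cycles[OF A'_subset]
    unfolding rel_cycles_def by blast+
  define e where "e = x - u"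
  have "x = u + u' + y" using \<open>z = x - y\<close> \<open>z = u + u'\<close> by (simp add: diff_eq_eq)
  then have e': "e = y + u'" by (simp add: e_def algebra_simps)
  have fin: "finite_chain x" "finite_chain y" "finite_chain u" "finite_chain u'"
    using x y u u' by (simp_all add: Infc_finite_chain)
  have "e \<in> Infc (H \<inter> H') n"
    using Infc_diff[OF x u(1)] Infc_add[OF y u'(1)] by (simp add: Infc_Int e_def flip: e')
  then have e_Int: "e \<in> Infc (H \<inter> H') (n - 1 + 1)" by simp
  have "w - bd e = bd u - (bd x - w)" using fin by (simp add: e_def bd_diff algebra_simps)
  then have "w - bd e \<in> Infc A (n - 1)" using Infc_diff[OF u(2) a] by (simp only:)
  moreover have "w - bd e = - (bd u' + (bd y - w))" using fin by (simp add: e' bd_add algebra_simps)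
  then have "w - bd e \<in> Infc A' (n - 1)" using Infc_uminus[OF Infc_add[OF u'(2) a']] by (simp only:)
  ultimately have "w - bd e \<in> Infc (A \<inter> A') (n - 1)" by (simp add: Infc_Int)
  from rel_boundariesI[OF this e_Int] show ?thesis by simp
qed

lemma connecting_rep_rel_cycle_Un:
  assumes "connecting_rep n z w" shows "z \<in> rel_cycles (H \<union> H') (A \<union> A') n"
proof -
  obtain x y where x: "x \<in> Infc H n" and y: "y \<in> Infc H' n" and z: "z = x - y"
    and a: "bd x - w \<in> Infc A (n - 1)" and a': "bd y - w \<in> Infc A' (n - 1)"
    using assms by (rule connecting_repE)
  have "x \<in> Infc (H \<union> H') n" "y \<in> Infc (H \<union> H') n"
    using x y Infc_mono[of H "H \<union> H'"] Infc_mono[of H' "H \<union> H'"] by blast+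
  then have "z \<in> Infc (H \<union> H') n" unfolding z by (rule Infc_diff)
  have "bd x - w \<in> Infc (A \<union> A') (n - 1)" "bd y - w \<in> Infc (A \<union> A') (n - 1)"
    using a a' Infc_mono[of A "A \<union> A'"] Infc_mono[of A' "A \<union> A'"] by blast+
  then have "(bd x - w) - (bd y - w) \<in> Infc (A \<union> A') (n - 1)" by (rule Infc_diff)
  moreover have "bd z = (bd x - w) - (bd y - w)"
    using x y by (simp add: z bd_diff Infc_finite_chain)
  ultimately show ?thesis using \<open>z \<in> Infc (H \<union> H') n\<close> by (simp add: rel_cycles_def)
qed

lemma connecting_rep_diff_cycles:
  assumes "x \<in> rel_cycles H A n" "y \<in> rel_cycles H' A' n" shows "connecting_rep n (x - y) 0"
  using assms by (intro connecting_repI) (simp_all add: rel_cycles_def)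

lemma connecting_rep_rel_boundaries:
  assumes "connecting_rep n z w"
  shows "w \<in> rel_boundaries H A (n - 1)" "w \<in> rel_boundaries H' A' (n - 1)"
proof -
  obtain x y where x: "x \<in> Infc H n" and y: "y \<in> Infc H' n"
    and a: "bd x - w \<in> Infc A (n - 1)" and a': "bd y - w \<in> Infc A' (n - 1)"
    using assms by (rule connecting_repE)
  show "w \<in> rel_boundaries H A (n - 1)"
    using rel_boundariesI[OF Infc_uminus[OF a], of x H] x by simp
  show "w \<in> rel_boundaries H' A' (n - 1)"
    using rel_boundariesI[OF Infc_uminus[OF a'], of y H'] y by simp
qed

lemma connecting_rep_unique:
  assumes "connecting_rep n z w" "connecting_rep n z' w'"
    and "z - z' \<in> rel_boundaries (H \<union> H') (A \<union> A') n"
  shows "w - w' \<in> rel_boundaries (H \<inter> H') (A \<inter> A') (n - 1)"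
proof -
  have "connecting_rep n (z - z') (w - w')"
    using connecting_rep_add[OF assms(1) connecting_rep_uminus[OF assms(2)]] by simp
  then show ?thesis using assms(3) by (rule connecting_rep_boundary)
qed

definition mv_delta :: "int \<Rightarrow> ('v set \<Rightarrow> 'g::ab_group_add) set set \<Rightarrow> ('v set \<Rightarrow> 'g) set set" where
  "mv_delta n Q = hcls (H \<inter> H') (A \<inter> A') (n - 1) (SOME w. \<exists>z\<in>\<Union>Q. connecting_rep n z w)"

lemma mv_delta_hcls:
  assumes rep: "connecting_rep n z w"
  shows "mv_delta n (hcls (H \<union> H') (A \<union> A') n z) = hcls (H \<inter> H') (A \<inter> A') (n - 1) w"
proof -
  let ?Q = "hcls (H \<union> H') (A \<union> A') n z"
  let ?P = "\<lambda>w'. \<exists>z'\<in>\<Union>?Q. connecting_rep n z' w'"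
  have "z \<in> \<Union>?Q" unfolding Union_hcls by (rule mem_coset_self[OF rel_boundaries_add_subgroup])
  with rep have "?P w" by blast
  then have "?P (SOME w'. ?P w')" by (rule someI[of ?P])
  then obtain z' where "z' \<in> \<Union>?Q" and rep': "connecting_rep n z' (SOME w'. ?P w')" by blast
  then have "z' - z \<in> rel_boundaries (H \<union> H') (A \<union> A') n" by (simp add: Union_hcls mem_coset_iff)
  with rep' rep have "(SOME w'. ?P w') - w \<in> rel_boundaries (H \<inter> H') (A \<inter> A') (n - 1)"
    by (rule connecting_rep_unique)
  then show ?thesis unfolding mv_delta_def by (simp add: hcls_eq_iff)
qed

lemma homologous_rel_cycle_Int:
  assumes x: "x \<in> rel_cycles H A n" and y: "y \<in> rel_cycles H' A' n"
    and xy: "x - y \<in> rel_boundaries (H \<union> H') (A \<union> A') n"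
  obtains c where "c \<in> rel_cycles (H \<inter> H') (A \<inter> A') n"
    "x - c \<in> rel_boundaries H A n" "y - c \<in> rel_boundaries H' A' n"
proof -
  obtain u u' where u: "u \<in> rel_boundaries H A n" and u': "u' \<in> rel_boundaries H' A' n"
    and "x - y = u + u'"
    by (rule rel_boundaries_Un_split[OF meet_H meet_A xy])
  then have c': "x - u = y + u'" by (simp add: algebra_simps)
  have "x - u \<in> rel_cycles H A n"
    using rel_cycles_diff[OF x] u rel_boundaries_subset_rel_cycles[OF A_subset] by blast
  moreover have "x - u \<in> rel_cycles H' A' n"
    unfolding c' using rel_cycles_add[OF y] u' rel_boundaries_subset_rel_cycles[OF A'_subset] by blast
  moreover have "y - (x - u) = - u'" using c' by (simp add: algebra_simps)
  then have "y - (x - u) \<in> rel_boundaries H' A' n"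
    using u' rel_boundaries_add_subgroup unfolding add_subgroup_def by metis
  ultimately show ?thesis using that u by (simp add: rel_cycles_Int)
qed

lemma rel_cycles_diff_of_connecting_boundary:
  assumes rep: "connecting_rep n z w" and w: "w \<in> rel_boundaries (H \<inter> H') (A \<inter> A') (n - 1)"
  obtains x y where "x \<in> rel_cycles H A n" "y \<in> rel_cycles H' A' n" "z = x - y"
proof -
  obtain x y where x: "x \<in> Infc H n" and y: "y \<in> Infc H' n" and z: "z = x - y"
    and a: "bd x - w \<in> Infc A (n - 1)" and a': "bd y - w \<in> Infc A' (n - 1)"
    using rep by (rule connecting_repE)
  obtain k e where k: "k \<in> Infc (A \<inter> A') (n - 1)" and e: "e \<in> Infc (H \<inter> H') (n - 1 + 1)"
    and "w = k + bd e"
    using w unfolding rel_boundaries_def by blast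
  then have k: "k \<in> Infc A (n - 1)" "k \<in> Infc A' (n - 1)" and e: "e \<in> Infc H n" "e \<in> Infc H' n"
    by (simp_all add: Infc_Int)
  have "bd (x - e) = (bd x - w) + k" "bd (y - e) = (bd y - w) + k"
    using x y e \<open>w = k + bd e\<close> by (simp_all add: bd_diff Infc_finite_chain)
  then have "x - e \<in> rel_cycles H A n" "y - e \<in> rel_cycles H' A' n"
    using Infc_diff[OF x e(1)] Infc_diff[OF y e(2)] Infc_add[OF a k(1)] Infc_add[OF a' k(2)]
    by (simp_all add: rel_cycles_def)
  moreover have "z = (x - e) - (y - e)" by (simp add: z)
  ultimately show ?thesis by (rule that)
qed

lemma connecting_rep_of_boundaries:
  assumes "c \<in> rel_boundaries H A (n - 1)" "c \<in> rel_boundaries H' A' (n - 1)"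
  obtains z where "connecting_rep n z c"
proof -
  obtain j d where j: "j \<in> Infc A (n - 1)" and d: "d \<in> Infc H n" and "c = j + bd d"
    using assms(1) unfolding rel_boundaries_def by auto
  then have "bd d - c = - j" by simp
  obtain j' d' where j': "j' \<in> Infc A' (n - 1)" and d': "d' \<in> Infc H' n" and "c = j' + bd d'"
    using assms(2) unfolding rel_boundaries_def by auto
  then have "bd d' - c = - j'" by simp
  have "connecting_rep n (d - d') c"
    using Infc_uminus[OF j] Infc_uminus[OF j'] \<open>bd d - c = - j\<close> \<open>bd d' - c = - j'\<close>
    by (intro connecting_repI[OF d d']) simp_all
  then show ?thesis by (rule that)
qed


lemma mv_delta_hom:
  "mv_delta n \<in> hom (rel_hom (H \<union> H') (A \<union> A') n :: ('v set \<Rightarrow> 'g::ab_group_add) set set monoid)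
    (rel_hom (H \<inter> H') (A \<inter> A') (n - 1))"
proof (rule rel_hom_homI)
  fix z assume "z \<in> rel_cycles (H \<union> H') (A \<union> A') n"
  then obtain w where rep: "connecting_rep n z w" by (rule connecting_rep_exists)
  show "mv_delta n (hcls (H \<union> H') (A \<union> A') n z) \<in> carrier (rel_hom (H \<inter> H') (A \<inter> A') (n - 1))"
    using connecting_rep_rel_cycle[OF rep] by (simp add: mv_delta_hcls[OF rep] rel_hom_carrier)
next
  fix z z' :: "'v set \<Rightarrow> 'g" assume "z \<in> rel_cycles (H \<union> H') (A \<union> A') n" "z' \<in> rel_cycles (H \<union> H') (A \<union> A') n"
  then obtain w w' where "connecting_rep n z w" "connecting_rep n z' w'"
    by (meson connecting_rep_exists)
  then show "mv_delta n (hcls (H \<union> H') (A \<union> A') n (z + z'))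
    = mv_delta n (hcls (H \<union> H') (A \<union> A') n z) \<otimes>\<^bsub>rel_hom (H \<inter> H') (A \<inter> A') (n - 1)\<^esub>
      mv_delta n (hcls (H \<union> H') (A \<union> A') n z')"
    by (simp add: mv_delta_hcls connecting_rep_add rel_hom_mult)
qed

lemma image_mv_alpha:
  "mv_alpha H A H' A' n ` carrier (rel_hom (H \<inter> H') (A \<inter> A') n)
    = kernel (rel_hom H A n \<times>\<times> rel_hom H' A' n) (rel_hom (H \<union> H') (A \<union> A') n) (mv_beta H A H' A' n)"
proof (intro equalityI subsetI)
  fix p assume "p \<in> mv_alpha H A H' A' n ` carrier (rel_hom (H \<inter> H') (A \<inter> A') n)"
  then obtain c where c: "c \<in> rel_cycles H A n" "c \<in> rel_cycles H' A' n"
    and p: "p = (hcls H A n c, hcls H' A' n c)"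
    by (auto simp: rel_hom_carrier mv_alpha_hcls rel_cycles_Int)
  then show "p \<in> kernel (rel_hom H A n \<times>\<times> rel_hom H' A' n) (rel_hom (H \<union> H') (A \<union> A') n)
      (mv_beta H A H' A' n)"
    by (simp add: kernel_def rel_hom_carrier mv_beta_hcls rel_hom_one)
next
  fix p assume "p \<in> kernel (rel_hom H A n \<times>\<times> rel_hom H' A' n) (rel_hom (H \<union> H') (A \<union> A') n)
      (mv_beta H A H' A' n)"
  then obtain x y where x: "x \<in> rel_cycles H A n" and y: "y \<in> rel_cycles H' A' n"
    and p: "p = (hcls H A n x, hcls H' A' n y)" and "mv_beta H A H' A' n p = \<one>\<^bsub>rel_hom (H \<union> H') (A \<union> A') n\<^esub>"
    by (auto simp: kernel_def rel_hom_carrier)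
  then have "x - y \<in> rel_boundaries (H \<union> H') (A \<union> A') n" by (simp add: mv_beta_hcls hcls_eq_one_iff)
  then obtain c where "c \<in> rel_cycles (H \<inter> H') (A \<inter> A') n"
    and "x - c \<in> rel_boundaries H A n" "y - c \<in> rel_boundaries H' A' n"
    by (rule homologous_rel_cycle_Int[OF x y])
  moreover from this have "p = mv_alpha H A H' A' n (hcls (H \<inter> H') (A \<inter> A') n c)"
    by (simp add: p mv_alpha_hcls hcls_eq_iff)
  ultimately show "p \<in> mv_alpha H A H' A' n ` carrier (rel_hom (H \<inter> H') (A \<inter> A') n)"
    by (auto simp: rel_hom_carrier)
qed

lemma image_mv_beta:
  "mv_beta H A H' A' n ` carrier (rel_hom H A n \<times>\<times> rel_hom H' A' n)
    = kernel (rel_hom (H \<union> H') (A \<union> A') n) (rel_hom (H \<inter> H') (A \<inter> A') (n - 1)) (mv_delta n)"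
proof (intro equalityI subsetI)
  fix Q assume "Q \<in> mv_beta H A H' A' n ` carrier (rel_hom H A n \<times>\<times> rel_hom H' A' n)"
  then obtain x y where xy: "x \<in> rel_cycles H A n" "y \<in> rel_cycles H' A' n"
    and Q: "Q = hcls (H \<union> H') (A \<union> A') n (x - y)"
    by (auto simp: rel_hom_carrier mv_beta_hcls)
  from xy have rep: "connecting_rep n (x - y) 0" by (rule connecting_rep_diff_cycles)
  show "Q \<in> kernel (rel_hom (H \<union> H') (A \<union> A') n) (rel_hom (H \<inter> H') (A \<inter> A') (n - 1)) (mv_delta n)"
    using connecting_rep_rel_cycle_Un[OF rep]
    by (simp add: kernel_def Q rel_hom_carrier mv_delta_hcls[OF rep] rel_hom_one)
next
  fix Q assume "Q \<in> kernel (rel_hom (H \<union> H') (A \<union> A') n) (rel_hom (H \<inter> H') (A \<inter> A') (n - 1))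
      (mv_delta n)"
  then obtain z where z: "z \<in> rel_cycles (H \<union> H') (A \<union> A') n" and Q: "Q = hcls (H \<union> H') (A \<union> A') n z"
    and "mv_delta n Q = \<one>\<^bsub>rel_hom (H \<inter> H') (A \<inter> A') (n - 1)\<^esub>"
    by (auto simp: kernel_def rel_hom_carrier)
  moreover obtain w where rep: "connecting_rep n z w" using z by (rule connecting_rep_exists)
  ultimately have "w \<in> rel_boundaries (H \<inter> H') (A \<inter> A') (n - 1)"
    by (simp add: mv_delta_hcls hcls_eq_one_iff)
  then obtain x y where "x \<in> rel_cycles H A n" "y \<in> rel_cycles H' A' n" "z = x - y"
    by (rule rel_cycles_diff_of_connecting_boundary[OF rep])
  then show "Q \<in> mv_beta H A H' A' n ` carrier (rel_hom H A n \<times>\<times> rel_hom H' A' n)"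
    unfolding Q by (auto simp: rel_hom_carrier mv_beta_hcls[symmetric])
qed

lemma image_mv_delta:
  "mv_delta n ` carrier (rel_hom (H \<union> H') (A \<union> A') n)
    = kernel (rel_hom (H \<inter> H') (A \<inter> A') (n - 1)) (rel_hom H A (n - 1) \<times>\<times> rel_hom H' A' (n - 1))
        (mv_alpha H A H' A' (n - 1))"
proof (intro equalityI subsetI)
  fix Q assume "Q \<in> mv_delta n ` carrier (rel_hom (H \<union> H') (A \<union> A') n)"
  then obtain z where z: "z \<in> rel_cycles (H \<union> H') (A \<union> A') n"
    and Q: "Q = mv_delta n (hcls (H \<union> H') (A \<union> A') n z)"
    by (auto simp: rel_hom_carrier)
  obtain w where rep: "connecting_rep n z w" using z by (rule connecting_rep_exists)
  show "Q \<in> kernel (rel_hom (H \<inter> H') (A \<inter> A') (n - 1)) (rel_hom H A (n - 1) \<times>\<times> rel_hom H' A' (n - 1))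
      (mv_alpha H A H' A' (n - 1))"
    using connecting_rep_rel_cycle[OF rep] connecting_rep_rel_boundaries[OF rep]
    by (simp add: kernel_def Q mv_delta_hcls[OF rep] rel_hom_carrier mv_alpha_hcls hcls_eq_one_iff)
next
  fix Q assume "Q \<in> kernel (rel_hom (H \<inter> H') (A \<inter> A') (n - 1))
      (rel_hom H A (n - 1) \<times>\<times> rel_hom H' A' (n - 1)) (mv_alpha H A H' A' (n - 1))"
  then obtain c where "Q = hcls (H \<inter> H') (A \<inter> A') (n - 1) c"
    and "mv_alpha H A H' A' (n - 1) Q = \<one>\<^bsub>rel_hom H A (n - 1) \<times>\<times> rel_hom H' A' (n - 1)\<^esub>"
    by (auto simp: kernel_def rel_hom_carrier)
  then have Q: "Q = hcls (H \<inter> H') (A \<inter> A') (n - 1) c"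
    and c: "c \<in> rel_boundaries H A (n - 1)" "c \<in> rel_boundaries H' A' (n - 1)"
    by (simp_all add: mv_alpha_hcls flip: hcls_eq_one_iff)
  from c obtain z where rep: "connecting_rep n z c" by (rule connecting_rep_of_boundaries)
  then have "Q = mv_delta n (hcls (H \<union> H') (A \<union> A') n z)" by (simp add: Q mv_delta_hcls)
  with connecting_rep_rel_cycle_Un[OF rep]
  show "Q \<in> mv_delta n ` carrier (rel_hom (H \<union> H') (A \<union> A') n)"
    by (auto simp: rel_hom_carrier)
qed

end

theorem theorem3p888:
  fixes H A H' A' :: "'v::linorder set set"
  assumes "hypergraph H" and "A \<subseteq> H"
      and "hypergraph H'" and "A' \<subseteq> H'"
      and "\<forall>\<sigma>\<in>H. \<forall>\<sigma>'\<in>H'. \<sigma> \<inter> \<sigma>' = {} \<or> \<sigma> \<inter> \<sigma>' \<in> H \<inter> H'"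
      and "\<forall>\<tau>\<in>A. \<forall>\<tau>'\<in>A'. \<tau> \<inter> \<tau>' = {} \<or> \<tau> \<inter> \<tau>' \<in> A \<inter> A'"
  shows "\<exists>\<delta> :: int \<Rightarrow> ('v set \<Rightarrow> 'g::ab_group_add) set set \<Rightarrow> ('v set \<Rightarrow> 'g) set set.
    \<forall>n::int.
      mv_alpha H A H' A' n \<in> hom (rel_hom (H \<inter> H') (A \<inter> A') n)
                                   (rel_hom H A n \<times>\<times> rel_hom H' A' n) \<and>
      mv_beta H A H' A' n \<in> hom (rel_hom H A n \<times>\<times> rel_hom H' A' n)
                                  (rel_hom (H \<union> H') (A \<union> A') n) \<and>
      \<delta> n \<in> hom (rel_hom (H \<union> H') (A \<union> A') n) (rel_hom (H \<inter> H') (A \<inter> A') (n - 1)) \<and>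
      mv_alpha H A H' A' n ` carrier (rel_hom (H \<inter> H') (A \<inter> A') n)
        = kernel (rel_hom H A n \<times>\<times> rel_hom H' A' n) (rel_hom (H \<union> H') (A \<union> A') n)
                 (mv_beta H A H' A' n) \<and>
      mv_beta H A H' A' n ` carrier (rel_hom H A n \<times>\<times> rel_hom H' A' n)
        = kernel (rel_hom (H \<union> H') (A \<union> A') n) (rel_hom (H \<inter> H') (A \<inter> A') (n - 1)) (\<delta> n) \<and>
      \<delta> n ` carrier (rel_hom (H \<union> H') (A \<union> A') n)
        = kernel (rel_hom (H \<inter> H') (A \<inter> A') (n - 1))
                 (rel_hom H A (n - 1) \<times>\<times> rel_hom H' A' (n - 1)) (mv_alpha H A H' A' (n - 1))"
proof -
  interpret mayer_vietoris H A H' A'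
    using assms(2,4,5,6) by unfold_locales (simp_all add: meet_closed_def)
  show ?thesis
    by (intro exI[of _ mv_delta] allI conjI mv_alpha_hom mv_beta_hom mv_delta_hom
        image_mv_alpha image_mv_beta image_mv_delta)
qed

end
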